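(* Let $\mathbb{U}_{n,G}$ be the class of all unitary $n$-qubit channels of gate complexity at most $G$, and let $\varepsilon<1/2$. Any online learner for $\mathbb{U}_{n,G}$ makes $\Omega(\min\{2^n,\sqrt{G}\})$ many $\varepsilon$-mistakes against a worst-case adversary. This remains true even if the adversary is forced to decide on a channel in $\mathbb{U}_{n,G}$ before the interaction with the learner.
   Context: A unitary $n$-qubit channel $\rho\mapsto U\rho U^\dagger$ has gate complexity at most $G$ if it can be written as a composition of at most $G$ two-qubit gate channels, each acting on some pair of the $n$ qubits (identity elsewhere). Online learning a class $\mathsf{C}$: in each round the adversary presents a channel test operator $E_{A,B}$ ($E_{A,B}\geq0$ on two $n$-qubit systems with $E_{A,B}\leq\sigma_A\otimes\mathbb{1}_B$ for some density operator $\sigma_A$), the learner predicts a value in $[0,1]$ based on past information, and the adversary reveals the true value $\mathrm{Tr}[E_{A,B}C^{\mathcal{N}}_{A,B}]$ for the target $\mathcal{N}\in\mathsf{C}$, with $C^{\mathcal{N}}_{A,B}=\sum_{i,j}|i\rangle\langle j|\otimes\mathcal{N}(|i\rangle\langle j|)$. An $\varepsilon$-mistake is a round where the prediction differs from the true value by more than $\varepsilon$. *)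

theory Defs
  imports Complex_Main "Jordan_Normal_Form.Matrix"
begin

text \<open>Hilbert space of n qubits has dimension 2^n; basis index x, qubit k is bit k of x.\<close>
definition qdim :: "nat \<Rightarrow> nat" where
  "qdim n = 2 ^ n"

definition adj :: "complex mat \<Rightarrow> complex mat" where
  "adj A = mat (dim_col A) (dim_row A) (\<lambda>(i, j). cnj (A $$ (j, i)))"

definition unitary_mat :: "nat \<Rightarrow> complex mat \<Rightarrow> bool" where
  "unitary_mat d V \<longleftrightarrow> V \<in> carrier_mat d d \<and> V * adj V = 1\<^sub>m d \<and> adj V * V = 1\<^sub>m d"

definition psd :: "nat \<Rightarrow> complex mat \<Rightarrow> bool" where
  "psd d A \<longleftrightarrow> A \<in> carrier_mat d d \<and>
     (\<forall>v :: nat \<Rightarrow> complex. let q = (\<Sum>i<d. \<Sum>j<d. cnj (v i) * A $$ (i, j) * v j)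
                                in Im q = 0 \<and> Re q \<ge> 0)"

definition mtrace :: "complex mat \<Rightarrow> complex" where
  "mtrace A = (\<Sum>i<dim_row A. A $$ (i, i))"

definition density_op :: "nat \<Rightarrow> complex mat \<Rightarrow> bool" where
  "density_op d \<sigma> \<longleftrightarrow> psd d \<sigma> \<and> mtrace \<sigma> = 1"

text \<open>Tensor (Kronecker) product; first factor is the more significant index.\<close>
definition kron :: "complex mat \<Rightarrow> complex mat \<Rightarrow> complex mat" where
  "kron A B = mat (dim_row A * dim_row B) (dim_col A * dim_col B)
     (\<lambda>(i, j). A $$ (i div dim_row B, j div dim_col B) * B $$ (i mod dim_row B, j mod dim_col B))"

definition ketbra :: "nat \<Rightarrow> nat \<Rightarrow> nat \<Rightarrow> complex mat" where
  "ketbra d i j = mat d d (\<lambda>(a, b). if a = i \<and> b = j then 1 else 0)"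

type_synonym channel = "complex mat \<Rightarrow> complex mat"

definition unitary_channel :: "complex mat \<Rightarrow> channel" where
  "unitary_channel U = (\<lambda>\<rho>. U * \<rho> * adj U)"

definition qbit :: "nat \<Rightarrow> nat \<Rightarrow> nat" where
  "qbit k x = (x div 2 ^ k) mod 2"

text \<open>The 4x4 unitary V acting on qubits p (first) and q (second), identity on the rest.\<close>
definition embed_gate :: "nat \<Rightarrow> nat \<Rightarrow> nat \<Rightarrow> complex mat \<Rightarrow> complex mat" where
  "embed_gate n p q V = mat (qdim n) (qdim n) (\<lambda>(x, y).
      if (\<forall>k<n. k \<noteq> p \<and> k \<noteq> q \<longrightarrow> qbit k x = qbit k y)
      then V $$ (2 * qbit p x + qbit q x, 2 * qbit p y + qbit q y) else 0)"

definition two_qubit_gate_channel :: "nat \<Rightarrow> channel \<Rightarrow> bool" where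
  "two_qubit_gate_channel n \<G> \<longleftrightarrow>
     (\<exists>p q V. p < n \<and> q < n \<and> p \<noteq> q \<and> unitary_mat 4 V \<and>
              \<G> = unitary_channel (embed_gate n p q V))"

definition gate_class :: "nat \<Rightarrow> nat \<Rightarrow> channel set" where
  "gate_class n G = {foldr (\<circ>) gs id | gs. length gs \<le> G \<and> (\<forall>g\<in>set gs. two_qubit_gate_channel n g)}"

definition choi :: "nat \<Rightarrow> channel \<Rightarrow> complex mat" where
  "choi n \<N> = mat (qdim n * qdim n) (qdim n * qdim n) (\<lambda>(x, y).
      \<Sum>i<qdim n. \<Sum>j<qdim n. kron (ketbra (qdim n) i j) (\<N> (ketbra (qdim n) i j)) $$ (x, y))"

definition channel_test :: "nat \<Rightarrow> complex mat \<Rightarrow> bool" where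
  "channel_test n E \<longleftrightarrow> psd (qdim n * qdim n) E \<and>
     (\<exists>\<sigma>. density_op (qdim n) \<sigma> \<and> psd (qdim n * qdim n) (kron \<sigma> (1\<^sub>m (qdim n)) - E))"

definition test_value :: "nat \<Rightarrow> complex mat \<Rightarrow> channel \<Rightarrow> real" where
  "test_value n E \<N> = Re (mtrace (E * choi n \<N>))"

text \<open>A history is the list of past (test operator, revealed true value) pairs.
  A (deterministic) learner maps the history and the current test to a prediction;
  an adversary strategy maps the history to the next test operator.\<close>
type_synonym history = "(complex mat \<times> real) list"

primrec hist :: "nat \<Rightarrow> (history \<Rightarrow> complex mat) \<Rightarrow> channel \<Rightarrow> nat \<Rightarrow> history" where
  "hist n A \<N> 0 = []"
| "hist n A \<N> (Suc t) = hist n A \<N> t @ [(A (hist n A \<N> t), test_value n (A (hist n A \<N> t)) \<N>)]"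

definition eps_mistakes ::
  "nat \<Rightarrow> (history \<Rightarrow> complex mat \<Rightarrow> real) \<Rightarrow> (history \<Rightarrow> complex mat) \<Rightarrow> channel \<Rightarrow> real \<Rightarrow> nat \<Rightarrow> nat" where
  "eps_mistakes n L A \<N> \<epsilon> T = card {t. t < T \<and>
      \<bar>L (hist n A \<N> t) (A (hist n A \<N> t)) - test_value n (A (hist n A \<N> t)) \<N>\<bar> > \<epsilon>}"

end

theory Submission
  imports Defs
begin

(* The adversary only uses diagonal phase unitaries D |x> = e^(i \<Phi>(x)) |x> whose phase depends on
   the first m qubits and takes values in {0, pi}.  Every phase \<Phi> of the first m qubits is
   realised, up to a global phase, by 3 * 2^m two-qubit gates: split \<Phi> into its mean and its
   odd part in the last qubit, and implement a signed phase (-1)^(b t) \<gamma>(b) recursively by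
   conjugating with CNOT gates.  The channel test built from the vector (|0,0> + |x,x>)/2 takes
   the value |(e^(i \<Phi>(0)) + e^(i \<Phi>(x)))/2|^2 on D, which is 1 or 0 according to whether
   \<Phi>(x) is 0 or pi.  As the learner is deterministic, the adversary runs it in advance on the
   tests x = 1, ..., 2^m - 1, answers each prediction with the farther of 0 and 1, and afterwards
   picks the phase consistent with these answers; then every round is an \<epsilon>-mistake.  With m
   maximal subject to m \<le> n and 3 * 2^m \<le> G this gives 2^m - 1 \<ge> min(2^n, G)/12 mistakes,
   more than the claimed min(2^n, sqrt G)/12. *)

lemma qbit_eq_bit: "qbit k x = (if bit x k then 1 else 0)"
  unfolding qbit_def by (simp add: bit_iff_odd odd_iff_mod_2_eq_one)

lemma bit_imp_less_of_less_exp: "x < (2::nat) ^ n \<Longrightarrow> bit x k \<Longrightarrow> k < n"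
  by (metis bit_take_bit_iff take_bit_nat_eq_self)

lemma eq_iff_low_bits_eq:
  fixes x y :: nat
  assumes "x < 2 ^ n" "y < 2 ^ n"
  shows "(\<forall>k<n. bit x k = bit y k) \<longleftrightarrow> x = y"
proof
  assume low: "\<forall>k<n. bit x k = bit y k"
  show "x = y"
  proof (rule bit_eqI)
    fix k
    show "bit x k = bit y k"
      using low bit_imp_less_of_less_exp[OF assms(1), of k] bit_imp_less_of_less_exp[OF assms(2), of k]
      by (cases "k < n") auto
  qed
qed simp

definition cnot_index :: "nat \<Rightarrow> nat \<Rightarrow> nat \<Rightarrow> nat" where
  "cnot_index p q x = (if bit x p then xor x (2 ^ q) else x)"

definition cnot_bits :: "nat \<Rightarrow> nat \<Rightarrow> (nat \<Rightarrow> bool) \<Rightarrow> nat \<Rightarrow> bool" where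
  "cnot_bits p q b = b(q := (b q \<noteq> b p))"

lemma bit_cnot_index: "p \<noteq> q \<Longrightarrow> bit (cnot_index p q x) = cnot_bits p q (bit x)"
  by (auto simp: cnot_index_def cnot_bits_def bit_xor_iff bit_exp_iff fun_eq_iff)

lemma cnot_index_less: "x < 2 ^ n \<Longrightarrow> q < n \<Longrightarrow> cnot_index p q x < (2::nat) ^ n"
proof -
  assume x: "x < 2 ^ n" and q: "q < n"
  have "take_bit n (xor x (2 ^ q)) = xor x (2 ^ q)"
    by (rule bit_eqI) (use x q in \<open>auto simp: bit_take_bit_iff bit_xor_iff bit_exp_iff dest: bit_imp_less_of_less_exp\<close>)
  then show ?thesis
    unfolding cnot_index_def by (metis x take_bit_nat_eq_self_iff)
qed

lemma cnot_index_cnot_index: "p \<noteq> q \<Longrightarrow> cnot_index p q (cnot_index p q x) = x"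
  by (rule bit_eqI) (auto simp: bit_cnot_index cnot_bits_def)

lemma index_mult_mat_sum:
  assumes "A \<in> carrier_mat d1 d2" "B \<in> carrier_mat d2 d3" "i < d1" "j < d3"
  shows "(A * B) $$ (i, j) = (\<Sum>k<d2. A $$ (i, k) * B $$ (k, j))"
  using assms by (simp add: scalar_prod_def lessThan_atLeast0)

lemma adj_carrier_mat [simp]: "A \<in> carrier_mat m n \<Longrightarrow> adj A \<in> carrier_mat n m"
  unfolding adj_def by (metis carrier_matD(1) carrier_matD(2) mat_carrier)

lemma adj_one_mat: "adj (1\<^sub>m d) = 1\<^sub>m d"
  by (rule eq_matI) (auto simp: adj_def)

lemma adj_mult_mat:
  assumes A: "A \<in> carrier_mat d1 d2" and B: "B \<in> carrier_mat d2 d3"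
  shows "adj (A * B) = adj B * adj A"
proof (rule eq_matI)
  fix i j assume "i < dim_row (adj B * adj A)" "j < dim_col (adj B * adj A)"
  then have i: "i < d3" and j: "j < d1" using A B by (auto simp: adj_def)
  have "adj (A * B) $$ (i, j) = cnj (\<Sum>k<d2. A $$ (j, k) * B $$ (k, i))"
    using A B i j by (simp add: adj_def index_mult_mat_sum[OF A B j i])
  also have "\<dots> = (\<Sum>k<d2. adj B $$ (i, k) * adj A $$ (k, j))"
    unfolding cnj_sum using A B i j by (intro sum.cong refl) (auto simp: adj_def mult.commute)
  also have "\<dots> = (adj B * adj A) $$ (i, j)"
    using A B i j by (simp add: index_mult_mat_sum[of "adj B" d3 d2 "adj A" d1])
  finally show "adj (A * B) $$ (i, j) = (adj B * adj A) $$ (i, j)" .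
qed (use A B in \<open>auto simp: adj_def\<close>)

lemma mult_conj_mult_assoc:
  assumes "A \<in> carrier_mat d d" "B \<in> carrier_mat d d" "\<rho> \<in> carrier_mat d d"
    "B' \<in> carrier_mat d d" "A' \<in> carrier_mat d d"
  shows "A * (B * \<rho> * B') * A' = (A * B) * \<rho> * (B' * A')"
  using assms by (simp add: assoc_mult_mat[of _ d d _ d _ d])

definition monomial_mat :: "nat \<Rightarrow> (nat \<Rightarrow> nat) \<Rightarrow> (nat \<Rightarrow> complex) \<Rightarrow> complex mat" where
  "monomial_mat d \<pi> c = mat d d (\<lambda>(i, j). if i = \<pi> j then c j else 0)"

lemma monomial_mat_carrier [simp]: "monomial_mat d \<pi> c \<in> carrier_mat d d"
  by (simp add: monomial_mat_def)

lemma monomial_mat_cong: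
  assumes "\<forall>j<d. \<pi> j = \<pi>' j" "\<forall>j<d. c j = c' j"
  shows "monomial_mat d \<pi> c = monomial_mat d \<pi>' c'"
  using assms by (intro eq_matI) (auto simp: monomial_mat_def)

lemma monomial_mat_id: "monomial_mat d (\<lambda>j. j) (\<lambda>_. 1) = 1\<^sub>m d"
  by (rule eq_matI) (auto simp: monomial_mat_def)

lemma mult_monomial_mat:
  assumes "\<forall>j<d. \<pi>2 j < d"
  shows "monomial_mat d \<pi>1 c1 * monomial_mat d \<pi>2 c2 =
    monomial_mat d (\<lambda>j. \<pi>1 (\<pi>2 j)) (\<lambda>j. c1 (\<pi>2 j) * c2 j)"
proof (rule eq_matI)
  fix i j assume "i < dim_row (monomial_mat d (\<lambda>j. \<pi>1 (\<pi>2 j)) (\<lambda>j. c1 (\<pi>2 j) * c2 j))"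
    "j < dim_col (monomial_mat d (\<lambda>j. \<pi>1 (\<pi>2 j)) (\<lambda>j. c1 (\<pi>2 j) * c2 j))"
  then have i: "i < d" and j: "j < d" by (auto simp: monomial_mat_def)
  have "(monomial_mat d \<pi>1 c1 * monomial_mat d \<pi>2 c2) $$ (i, j)
      = (\<Sum>k<d. monomial_mat d \<pi>1 c1 $$ (i, k) * monomial_mat d \<pi>2 c2 $$ (k, j))"
    by (rule index_mult_mat_sum[OF monomial_mat_carrier monomial_mat_carrier i j])
  also have "\<dots> = (\<Sum>k<d. if k = \<pi>2 j then (if i = \<pi>1 k then c1 k else 0) * c2 j else 0)"
    by (rule sum.cong) (auto simp: monomial_mat_def i j)
  also have "\<dots> = (if i = \<pi>1 (\<pi>2 j) then c1 (\<pi>2 j) else 0) * c2 j"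
    using assms j by (simp add: sum.delta)
  finally show "(monomial_mat d \<pi>1 c1 * monomial_mat d \<pi>2 c2) $$ (i, j)
      = monomial_mat d (\<lambda>j. \<pi>1 (\<pi>2 j)) (\<lambda>j. c1 (\<pi>2 j) * c2 j) $$ (i, j)"
    using i j by (simp add: monomial_mat_def)
qed (auto simp: monomial_mat_def)

lemma adj_monomial_mat:
  assumes "\<forall>j<d. \<pi> j < d \<and> \<pi> (\<pi> j) = j"
  shows "adj (monomial_mat d \<pi> c) = monomial_mat d \<pi> (\<lambda>j. cnj (c (\<pi> j)))"
  using assms by (intro eq_matI) (auto simp: adj_def monomial_mat_def)

lemma unitary_monomial_mat:
  assumes "\<forall>j<d. \<pi> j < d \<and> \<pi> (\<pi> j) = j" "\<forall>j<d. c j * cnj (c j) = 1"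
  shows "unitary_mat d (monomial_mat d \<pi> c)"
proof -
  have "monomial_mat d \<pi> c * adj (monomial_mat d \<pi> c) = 1\<^sub>m d"
    "adj (monomial_mat d \<pi> c) * monomial_mat d \<pi> c = 1\<^sub>m d"
    using assms unfolding monomial_mat_id[symmetric] adj_monomial_mat[OF assms(1)]
    by (subst mult_monomial_mat, simp, auto intro!: monomial_mat_cong simp: mult.commute)+
  then show ?thesis by (simp add: unitary_mat_def)
qed

section \<open>Diagonal phases and CNOT gates\<close>

text \<open>The phase of a basis vector is a function of its bit string, so that conjugation by a
  CNOT gate acts on phases by \<^const>\<open>cnot_bits\<close>.\<close>

definition diag_phase :: "nat \<Rightarrow> ((nat \<Rightarrow> bool) \<Rightarrow> real) \<Rightarrow> complex mat" where
  "diag_phase n \<Phi> = monomial_mat (2 ^ n) (\<lambda>j. j) (\<lambda>j. cis (\<Phi> (bit j)))"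

definition cnot_mat :: "nat \<Rightarrow> nat \<Rightarrow> nat \<Rightarrow> complex mat" where
  "cnot_mat n p q = monomial_mat (2 ^ n) (cnot_index p q) (\<lambda>_. 1)"

lemma diag_phase_carrier [simp]: "diag_phase n \<Phi> \<in> carrier_mat (2 ^ n) (2 ^ n)"
  by (simp add: diag_phase_def)

lemma cnot_mat_carrier [simp]: "cnot_mat n p q \<in> carrier_mat (2 ^ n) (2 ^ n)"
  by (simp add: cnot_mat_def)

lemma diag_phase_mult: "diag_phase n \<Phi> * diag_phase n \<Psi> = diag_phase n (\<lambda>b. \<Phi> b + \<Psi> b)"
  unfolding diag_phase_def by (subst mult_monomial_mat) (auto simp: cis_mult intro!: monomial_mat_cong)

lemma adj_diag_phase: "adj (diag_phase n \<Phi>) = diag_phase n (\<lambda>b. - \<Phi> b)"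
  unfolding diag_phase_def by (subst adj_monomial_mat) (auto intro!: monomial_mat_cong simp: cis_cnj)

lemma diag_phase_zero: "diag_phase n (\<lambda>b. 0) = 1\<^sub>m (2 ^ n)"
  by (rule eq_matI) (auto simp: diag_phase_def monomial_mat_def)

lemma adj_cnot_mat: "p \<noteq> q \<Longrightarrow> q < n \<Longrightarrow> adj (cnot_mat n p q) = cnot_mat n p q"
  unfolding cnot_mat_def
  by (subst adj_monomial_mat) (auto intro!: monomial_mat_cong simp: cnot_index_less cnot_index_cnot_index)

lemma cnot_mat_diag_phase_cnot_mat:
  "p \<noteq> q \<Longrightarrow> q < n \<Longrightarrow>
    cnot_mat n p q * diag_phase n \<Phi> * cnot_mat n p q = diag_phase n (\<lambda>b. \<Phi> (cnot_bits p q b))"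
  unfolding cnot_mat_def diag_phase_def
  by (subst mult_monomial_mat, simp, subst mult_monomial_mat)
     (auto simp: cnot_index_less cnot_index_cnot_index bit_cnot_index intro!: monomial_mat_cong)

definition gate_index :: "nat \<Rightarrow> nat \<Rightarrow> nat \<Rightarrow> nat" where
  "gate_index p q x = 2 * (if bit x p then 1 else 0) + (if bit x q then 1 else 0)"

lemma gate_index_less: "gate_index p q x < 4"
  by (simp add: gate_index_def)

lemma gate_index_eq_iff: "gate_index p q x = gate_index p q y \<longleftrightarrow> bit x p = bit y p \<and> bit x q = bit y q"
  by (auto simp: gate_index_def split: if_splits)

lemma index_embed_gate:
  assumes "x < 2 ^ n" "y < 2 ^ n"
  shows "embed_gate n p q V $$ (x, y) =
    (if \<forall>k<n. k \<noteq> p \<and> k \<noteq> q \<longrightarrow> bit x k = bit y k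
     then V $$ (gate_index p q x, gate_index p q y) else 0)"
proof -
  have "(\<forall>k<n. k \<noteq> p \<and> k \<noteq> q \<longrightarrow> qbit k x = qbit k y) \<longleftrightarrow>
      (\<forall>k<n. k \<noteq> p \<and> k \<noteq> q \<longrightarrow> bit x k = bit y k)"
    by (auto simp: qbit_eq_bit)
  moreover have "2 * qbit p z + qbit q z = gate_index p q z" for z
    by (simp add: qbit_eq_bit gate_index_def)
  ultimately show ?thesis
    using assms unfolding embed_gate_def qdim_def by (simp only: index_mat case_prod_conv)
qed

lemma embed_gate_monomial_mat:
  assumes \<pi>: "\<forall>y<2 ^ n. \<pi> y < 2 ^ n \<and> (\<forall>k<n. k \<noteq> p \<and> k \<noteq> q \<longrightarrow> bit (\<pi> y) k = bit y k)
              \<and> gate_index p q (\<pi> y) = \<sigma> (gate_index p q y)"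
  shows "embed_gate n p q (monomial_mat 4 \<sigma> c) = monomial_mat (2 ^ n) \<pi> (\<lambda>y. c (gate_index p q y))"
proof (rule eq_matI)
  fix x y assume "x < dim_row (monomial_mat (2 ^ n) \<pi> (\<lambda>y. c (gate_index p q y)))"
    "y < dim_col (monomial_mat (2 ^ n) \<pi> (\<lambda>y. c (gate_index p q y)))"
  then have x: "x < 2 ^ n" and y: "y < 2 ^ n" by (auto simp: monomial_mat_def)
  have \<pi>y: "\<pi> y < 2 ^ n" "\<forall>k<n. k \<noteq> p \<and> k \<noteq> q \<longrightarrow> bit (\<pi> y) k = bit y k"
    "gate_index p q (\<pi> y) = \<sigma> (gate_index p q y)" using \<pi> y by auto
  have entry: "(\<forall>k<n. k \<noteq> p \<and> k \<noteq> q \<longrightarrow> bit x k = bit y k) \<and> gate_index p q x = \<sigma> (gate_index p q y)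
    \<longleftrightarrow> x = \<pi> y"
  proof
    assume outside: "(\<forall>k<n. k \<noteq> p \<and> k \<noteq> q \<longrightarrow> bit x k = bit y k) \<and> gate_index p q x = \<sigma> (gate_index p q y)"
    then have "bit x p = bit (\<pi> y) p" "bit x q = bit (\<pi> y) q"
      using \<pi>y(3) gate_index_eq_iff by metis+
    then have "\<forall>k<n. bit x k = bit (\<pi> y) k"
      using outside \<pi>y(2) by metis
    then show "x = \<pi> y"
      using eq_iff_low_bits_eq[OF x \<pi>y(1)] by blast
  qed (use \<pi>y in simp)
  show "embed_gate n p q (monomial_mat 4 \<sigma> c) $$ (x, y) =
      monomial_mat (2 ^ n) \<pi> (\<lambda>y. c (gate_index p q y)) $$ (x, y)"
    using x y entry by (auto simp: index_embed_gate monomial_mat_def gate_index_less)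
qed (auto simp: embed_gate_def monomial_mat_def qdim_def)

lemma two_qubit_gate_diag_phase:
  assumes "p \<noteq> q" "p < n" "q < n"
  shows "two_qubit_gate_channel n (unitary_channel (diag_phase n (\<lambda>b. g (b p) (b q))))"
proof -
  define V where "V = monomial_mat 4 (\<lambda>i. i) (\<lambda>i. cis (g (2 \<le> i) (odd i)))"
  have "unitary_mat 4 V"
    unfolding V_def by (rule unitary_monomial_mat) (auto simp: cis_cnj cis_mult)
  moreover have "embed_gate n p q V =
      monomial_mat (2 ^ n) (\<lambda>i. i) (\<lambda>y. cis (g (2 \<le> gate_index p q y) (odd (gate_index p q y))))"
    unfolding V_def by (rule embed_gate_monomial_mat) (use assms in auto)
  moreover have "\<dots> = diag_phase n (\<lambda>b. g (b p) (b q))"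
    unfolding diag_phase_def by (rule monomial_mat_cong) (auto simp: gate_index_def)
  ultimately show ?thesis
    using assms unfolding two_qubit_gate_channel_def by metis
qed

lemma two_qubit_gate_cnot:
  assumes "p \<noteq> q" "p < n" "q < n"
  shows "two_qubit_gate_channel n (unitary_channel (cnot_mat n p q))"
proof -
  define \<sigma> :: "nat \<Rightarrow> nat" where "\<sigma> i = (if i < 2 then i else 5 - i)" for i
  define V where "V = monomial_mat 4 \<sigma> (\<lambda>_. 1)"
  have "unitary_mat 4 V"
    unfolding V_def by (rule unitary_monomial_mat) (auto simp: \<sigma>_def)
  moreover have "embed_gate n p q V = cnot_mat n p q"
    unfolding V_def cnot_mat_def
    by (rule embed_gate_monomial_mat)
       (use assms in \<open>auto simp: cnot_index_less bit_cnot_index cnot_bits_def gate_index_def \<sigma>_def\<close>)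
  ultimately show ?thesis
    using assms unfolding two_qubit_gate_channel_def by metis
qed

section \<open>Circuits for diagonal phases\<close>

lemma foldr_comp_append: "foldr (\<circ>) (fs @ gs) id = foldr (\<circ>) fs id \<circ> foldr (\<circ>) gs id"
  by (induction fs) auto

definition circuit_implements :: "nat \<Rightarrow> channel list \<Rightarrow> complex mat \<Rightarrow> bool" where
  "circuit_implements n gs U \<longleftrightarrow>
     (\<forall>\<rho>\<in>carrier_mat (2 ^ n) (2 ^ n). foldr (\<circ>) gs id \<rho> = unitary_channel U \<rho>)"

lemma circuit_implements_gate: "circuit_implements n [unitary_channel U] U"
  by (simp add: circuit_implements_def)

lemma circuit_implements_append:
  assumes gs1: "circuit_implements n gs1 U1" and gs2: "circuit_implements n gs2 U2"
    and U1: "U1 \<in> carrier_mat (2 ^ n) (2 ^ n)" and U2: "U2 \<in> carrier_mat (2 ^ n) (2 ^ n)"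
  shows "circuit_implements n (gs1 @ gs2) (U1 * U2)"
  unfolding circuit_implements_def
proof
  fix \<rho> :: "complex mat" assume \<rho>: "\<rho> \<in> carrier_mat (2 ^ n) (2 ^ n)"
  then have U2\<rho>: "U2 * \<rho> * adj U2 \<in> carrier_mat (2 ^ n) (2 ^ n)"
    using U2 by (metis adj_carrier_mat mult_carrier_mat)
  have "foldr (\<circ>) (gs1 @ gs2) id \<rho> = foldr (\<circ>) gs1 id (foldr (\<circ>) gs2 id \<rho>)"
    by (simp only: foldr_comp_append comp_apply)
  also have "\<dots> = U1 * (U2 * \<rho> * adj U2) * adj U1"
    using gs1 gs2 \<rho> U2\<rho>
    unfolding circuit_implements_def by (simp add: unitary_channel_def)
  also have "\<dots> = (U1 * U2) * \<rho> * (adj U2 * adj U1)"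
    by (rule mult_conj_mult_assoc) (use U1 U2 \<rho> in auto)
  also have "\<dots> = unitary_channel (U1 * U2) \<rho>"
    using U1 U2 by (simp add: unitary_channel_def adj_mult_mat)
  finally show "foldr (\<circ>) (gs1 @ gs2) id \<rho> = unitary_channel (U1 * U2) \<rho>" .
qed

definition phase_realizable :: "nat \<Rightarrow> nat \<Rightarrow> ((nat \<Rightarrow> bool) \<Rightarrow> real) \<Rightarrow> bool" where
  "phase_realizable n k \<Phi> \<longleftrightarrow> (\<exists>gs c. length gs \<le> k \<and> (\<forall>g\<in>set gs. two_qubit_gate_channel n g) \<and>
     circuit_implements n gs (diag_phase n (\<lambda>b. \<Phi> b + c)))"

lemma phase_realizable_cong:
  assumes "phase_realizable n k \<Phi>" "k \<le> k'" "\<And>b. \<Phi> b = \<Psi> b"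
  shows "phase_realizable n k' \<Psi>"
proof -
  have "\<Phi> = \<Psi>" using assms(3) by auto
  then show ?thesis using assms(1,2) unfolding phase_realizable_def by (meson order_trans)
qed

lemma phase_realizable_const: "phase_realizable n k (\<lambda>b. a)"
  unfolding phase_realizable_def circuit_implements_def
  by (intro exI[of _ "[]"] exI[of _ "- a"]) (simp add: unitary_channel_def diag_phase_zero adj_one_mat)

lemma phase_realizable_two_qubit:
  assumes "p \<noteq> q" "p < n" "q < n"
  shows "phase_realizable n 1 (\<lambda>b. g (b p) (b q))"
  using two_qubit_gate_diag_phase[OF assms, of g] circuit_implements_gate unfolding phase_realizable_def
  by (intro exI[of _ "[unitary_channel (diag_phase n (\<lambda>b. g (b p) (b q)))]"] exI[of _ 0]) simp

lemma phase_realizable_add: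
  assumes "phase_realizable n k1 \<Phi>1" "phase_realizable n k2 \<Phi>2"
  shows "phase_realizable n (k1 + k2) (\<lambda>b. \<Phi>1 b + \<Phi>2 b)"
proof -
  obtain gs1 c1 where gs1: "length gs1 \<le> k1" "\<forall>g\<in>set gs1. two_qubit_gate_channel n g"
    "circuit_implements n gs1 (diag_phase n (\<lambda>b. \<Phi>1 b + c1))"
    using assms(1) unfolding phase_realizable_def by blast
  obtain gs2 c2 where gs2: "length gs2 \<le> k2" "\<forall>g\<in>set gs2. two_qubit_gate_channel n g"
    "circuit_implements n gs2 (diag_phase n (\<lambda>b. \<Phi>2 b + c2))"
    using assms(2) unfolding phase_realizable_def by blast
  have "circuit_implements n (gs1 @ gs2) (diag_phase n (\<lambda>b. \<Phi>1 b + c1) * diag_phase n (\<lambda>b. \<Phi>2 b + c2))"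
    by (rule circuit_implements_append[OF gs1(3) gs2(3)]) simp_all
  also have "diag_phase n (\<lambda>b. \<Phi>1 b + c1) * diag_phase n (\<lambda>b. \<Phi>2 b + c2) =
      diag_phase n (\<lambda>b. (\<Phi>1 b + \<Phi>2 b) + (c1 + c2))"
    by (simp add: diag_phase_mult algebra_simps)
  finally show ?thesis
    using gs1 gs2 unfolding phase_realizable_def by (intro exI[of _ "gs1 @ gs2"] exI[of _ "c1 + c2"]) auto
qed

lemma phase_realizable_cnot_conj:
  assumes pq: "p \<noteq> q" "p < n" "q < n" and realizable: "phase_realizable n k \<Phi>"
  shows "phase_realizable n (k + 2) (\<lambda>b. \<Phi> (cnot_bits p q b))"
proof -
  obtain gs c where gs: "length gs \<le> k" "\<forall>g\<in>set gs. two_qubit_gate_channel n g"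
    "circuit_implements n gs (diag_phase n (\<lambda>b. \<Phi> b + c))"
    using realizable unfolding phase_realizable_def by blast
  let ?C = "cnot_mat n p q" and ?D = "diag_phase n (\<lambda>b. \<Phi> b + c)"
  define gs' where "gs' = [unitary_channel ?C] @ gs @ [unitary_channel ?C]"
  have "circuit_implements n gs' (?C * (?D * ?C))"
    unfolding gs'_def
    by (intro circuit_implements_append circuit_implements_gate gs(3))
       (simp_all add: mult_carrier_mat[of _ "2 ^ n" "2 ^ n"])
  also have "?C * (?D * ?C) = diag_phase n (\<lambda>b. \<Phi> (cnot_bits p q b) + c)"
    using pq cnot_mat_diag_phase_cnot_mat[of p q n "\<lambda>b. \<Phi> b + c"]
    by (simp add: assoc_mult_mat[of _ "2 ^ n" "2 ^ n" _ "2 ^ n" _ "2 ^ n"])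
  finally show ?thesis
    using gs(1,2) two_qubit_gate_cnot[OF pq] unfolding phase_realizable_def gs'_def
    by (intro exI[of _ gs'] exI[of _ c]) (auto simp: gs'_def)
qed

definition depends_on_first :: "nat \<Rightarrow> ((nat \<Rightarrow> bool) \<Rightarrow> 'a) \<Rightarrow> bool" where
  "depends_on_first m \<Phi> \<longleftrightarrow> (\<forall>b b'. (\<forall>i<m. b i = b' i) \<longrightarrow> \<Phi> b = \<Phi> b')"

lemma depends_on_first_0: "depends_on_first 0 \<Phi> \<Longrightarrow> \<Phi> b = \<Phi> b'"
  unfolding depends_on_first_def by blast

lemma depends_on_first_fun_upd:
  assumes "depends_on_first (Suc s) \<Phi>"
  shows "depends_on_first s (\<lambda>b. \<Phi> (b(s := v)))"
  unfolding depends_on_first_def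
proof (intro allI impI)
  fix b b' :: "nat \<Rightarrow> bool"
  assume "\<forall>i<s. b i = b' i"
  then have "\<forall>i<Suc s. (b(s := v)) i = (b'(s := v)) i" by (auto simp: less_Suc_eq)
  then show "\<Phi> (b(s := v)) = \<Phi> (b'(s := v))"
    using assms unfolding depends_on_first_def by blast
qed

lemma depends_on_first_comp2:
  "depends_on_first s f \<Longrightarrow> depends_on_first s g \<Longrightarrow> depends_on_first s (\<lambda>b. h (f b) (g b))"
  unfolding depends_on_first_def by metis

text \<open>With A the mean and B the half-difference of \<open>\<gamma>\<close> in bit s, the signed phase
  (-1)^(b t) \<open>\<gamma>\<close> equals (-1)^(b t) A + (-1)^(b t + b s) B; both summands are signed phases
  depending on fewer bits, the second one conjugated by the CNOT gate from s to t.\<close>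

lemma phase_realizable_signed:
  assumes n: "2 \<le> n" and t: "t < n"
  shows "s \<le> t \<Longrightarrow> depends_on_first s \<gamma> \<Longrightarrow>
    phase_realizable n (3 * 2 ^ s - 2) (\<lambda>b. (if b t then 1 else -1) * \<gamma> b)"
proof (induction s arbitrary: \<gamma>)
  case 0
  define q :: nat where "q = (if t = 0 then 1 else 0)"
  have q: "t \<noteq> q" "q < n" using n by (auto simp: q_def)
  show ?case
  proof (rule phase_realizable_cong[OF phase_realizable_two_qubit[OF q(1) t q(2),
        of "\<lambda>u _. (if u then 1 else -1) * \<gamma> (\<lambda>_. False)"]])
    show "(if b t then 1 else -1) * \<gamma> (\<lambda>_. False) = (if b t then 1 else -1) * \<gamma> b" for b
      using depends_on_first_0[OF "0.prems"(2), of "\<lambda>_. False" b] by simp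
  qed simp
next
  case (Suc s)
  define A where "A b = (\<gamma> (b(s := False)) + \<gamma> (b(s := True))) / 2" for b
  define B where "B b = (\<gamma> (b(s := False)) - \<gamma> (b(s := True))) / 2" for b
  note halves = depends_on_first_fun_upd[OF Suc.prems(2), of False]
    depends_on_first_fun_upd[OF Suc.prems(2), of True]
  have A: "depends_on_first s A"
    unfolding A_def by (rule depends_on_first_comp2[OF halves, of "\<lambda>x y. (x + y) / 2"])
  have B: "depends_on_first s B"
    unfolding B_def by (rule depends_on_first_comp2[OF halves, of "\<lambda>x y. (x - y) / 2"])
  have s: "s < t" "s \<le> t" using Suc.prems(1) by auto
  have "phase_realizable n (3 * 2 ^ s - 2 + (3 * 2 ^ s - 2 + 2))
     (\<lambda>b. (if b t then 1 else -1) * A b + (if cnot_bits s t b t then 1 else -1) * B (cnot_bits s t b))"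
    using phase_realizable_add[OF Suc.IH[OF s(2) A] phase_realizable_cnot_conj[OF _ _ t Suc.IH[OF s(2) B]]] s t
    by simp
  moreover have "3 * 2 ^ s - 2 + (3 * 2 ^ s - 2 + 2) \<le> (3 * 2 ^ Suc s - 2 :: nat)"
  proof -
    have "(2::nat) \<le> 3 * 2 ^ s" using one_le_power[of "2::nat" s] by linarith
    then show ?thesis by simp
  qed
  moreover have "(if b t then 1 else -1) * A b + (if cnot_bits s t b t then 1 else -1) * B (cnot_bits s t b) =
      (if b t then 1 else -1) * \<gamma> b" for b
  proof -
    have "\<forall>i<s. cnot_bits s t b i = b i" using s by (simp add: cnot_bits_def)
    then have "B (cnot_bits s t b) = B b" using B unfolding depends_on_first_def by blast
    moreover have "\<gamma> (b(s := b s)) = \<gamma> b" by simp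
    ultimately show ?thesis
      unfolding A_def B_def cnot_bits_def by (cases "b s"; cases "b t") (simp_all add: field_simps)
  qed
  ultimately show ?case by (rule phase_realizable_cong)
qed

lemma phase_realizable_depends_on_first:
  assumes n: "2 \<le> n"
  shows "m \<le> n \<Longrightarrow> depends_on_first m \<Psi> \<Longrightarrow> phase_realizable n (3 * 2 ^ m) \<Psi>"
proof (induction m arbitrary: \<Psi>)
  case 0
  show ?case
    by (rule phase_realizable_cong[OF phase_realizable_const[of n 0 "\<Psi> (\<lambda>_. False)"]])
       (simp_all add: depends_on_first_0[OF "0.prems"(2), of "\<lambda>_. False"])
next
  case (Suc m)
  define A where "A b = (\<Psi> (b(m := False)) + \<Psi> (b(m := True))) / 2" for b
  define B where "B b = (\<Psi> (b(m := True)) - \<Psi> (b(m := False))) / 2" for b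
  note halves = depends_on_first_fun_upd[OF Suc.prems(2), of False]
    depends_on_first_fun_upd[OF Suc.prems(2), of True]
  have A: "depends_on_first m A"
    unfolding A_def by (rule depends_on_first_comp2[OF halves, of "\<lambda>x y. (x + y) / 2"])
  have B: "depends_on_first m B"
    unfolding B_def by (rule depends_on_first_comp2[OF halves, of "\<lambda>x y. (y - x) / 2"])
  have m: "m < n" using Suc.prems(1) by simp
  have "phase_realizable n (3 * 2 ^ m + (3 * 2 ^ m - 2)) (\<lambda>b. A b + (if b m then 1 else -1) * B b)"
    by (rule phase_realizable_add[OF Suc.IH[OF less_imp_le[OF m] A] phase_realizable_signed[OF n m order.refl B]])
  moreover have "3 * 2 ^ m + (3 * 2 ^ m - 2) \<le> (3 * 2 ^ Suc m :: nat)" by simp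
  moreover have "A b + (if b m then 1 else -1) * B b = \<Psi> b" for b
  proof -
    have "\<Psi> (b(m := b m)) = \<Psi> b" by simp
    then show ?thesis unfolding A_def B_def by (cases "b m") (simp_all add: field_simps)
  qed
  ultimately show ?case by (rule phase_realizable_cong)
qed

section \<open>Pair tests on diagonal phase channels\<close>

lemma choi_cong:
  assumes "\<forall>\<rho>\<in>carrier_mat (2 ^ n) (2 ^ n). \<N> \<rho> = \<M> \<rho>"
  shows "choi n \<N> = choi n \<M>"
proof -
  have "ketbra (2 ^ n) i j \<in> carrier_mat (2 ^ n) (2 ^ n)" for i j
    by (simp add: ketbra_def)
  then show ?thesis
    using assms unfolding choi_def qdim_def by simp
qed

lemma test_value_cong:
  assumes "\<forall>\<rho>\<in>carrier_mat (2 ^ n) (2 ^ n). \<N> \<rho> = \<M> \<rho>"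
  shows "test_value n E \<N> = test_value n E \<M>"
  unfolding test_value_def using choi_cong[OF assms] by simp

lemma index_diag_phase_conj:
  assumes \<rho>: "\<rho> \<in> carrier_mat (2 ^ n) (2 ^ n)" and a: "a < 2 ^ n" and b: "b < 2 ^ n"
  shows "unitary_channel (diag_phase n \<phi>) \<rho> $$ (a, b) = cis (\<phi> (bit a)) * \<rho> $$ (a, b) * cnj (cis (\<phi> (bit b)))"
proof -
  let ?U = "diag_phase n \<phi>"
  have U\<rho>: "?U * \<rho> \<in> carrier_mat (2 ^ n) (2 ^ n)"
    using \<rho> by (metis diag_phase_carrier mult_carrier_mat)
  have U': "adj ?U \<in> carrier_mat (2 ^ n) (2 ^ n)"
    by simp
  have left: "(?U * \<rho>) $$ (a, k) = cis (\<phi> (bit a)) * \<rho> $$ (a, k)" if "k < 2 ^ n" for k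
  proof -
    have "(?U * \<rho>) $$ (a, k) = (\<Sum>l<2 ^ n. ?U $$ (a, l) * \<rho> $$ (l, k))"
      by (rule index_mult_mat_sum[OF diag_phase_carrier \<rho> a that])
    also have "\<dots> = (\<Sum>l<2 ^ n. if l = a then cis (\<phi> (bit a)) * \<rho> $$ (a, k) else 0)"
      by (rule sum.cong) (auto simp: diag_phase_def monomial_mat_def a)
    finally show ?thesis using a by simp
  qed
  have right: "adj ?U $$ (k, b) = (if k = b then cnj (cis (\<phi> (bit b))) else 0)" if "k < 2 ^ n" for k
    using that b unfolding adj_diag_phase by (simp add: diag_phase_def monomial_mat_def cis_cnj)
  have "unitary_channel ?U \<rho> $$ (a, b) = (\<Sum>k<2 ^ n. (?U * \<rho>) $$ (a, k) * adj ?U $$ (k, b))"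
    unfolding unitary_channel_def by (rule index_mult_mat_sum[OF U\<rho> U' a b])
  also have "\<dots> = (\<Sum>k<2 ^ n. if k = b then cis (\<phi> (bit a)) * \<rho> $$ (a, b) * cnj (cis (\<phi> (bit b))) else 0)"
    by (rule sum.cong) (auto simp: left right)
  finally show ?thesis using b by simp
qed

text \<open>An index X of the product of two n-qubit systems stands for the pair
  (X div 2^n, X mod 2^n), as in \<^const>\<open>kron\<close>.\<close>

definition diag_phase_vec :: "nat \<Rightarrow> ((nat \<Rightarrow> bool) \<Rightarrow> real) \<Rightarrow> nat \<Rightarrow> complex" where
  "diag_phase_vec n \<phi> X = (if X div 2 ^ n = X mod 2 ^ n then cis (\<phi> (bit (X mod 2 ^ n))) else 0)"

lemma div_mod_less_of_less_square:
  fixes X D :: nat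
  assumes "X < D * D"
  shows "X div D < D" "X mod D < D"
proof -
  show "X div D < D" using assms by (simp add: less_mult_imp_div_less)
  show "X mod D < D" using assms by (metis mod_less_divisor mult_0_right not_gr_zero not_less0)
qed

lemma sum_sum_delta:
  assumes "a < (D::nat)" "b < D"
  shows "(\<Sum>i<D. \<Sum>j<D. if i = a then if j = b then f i j else 0 else 0) = f a b"
proof -
  have "(\<Sum>j<D. if i = a then if j = b then f i j else 0 else 0) = (if i = a then f i b else 0)" for i
    using assms(2) by (cases "i = a") (simp_all add: sum.delta)
  then show ?thesis using assms(1) by (simp add: sum.delta)
qed

lemma choi_diag_phase:
  "choi n (unitary_channel (diag_phase n \<phi>)) =
     mat (2 ^ n * 2 ^ n) (2 ^ n * 2 ^ n) (\<lambda>(X, Y). diag_phase_vec n \<phi> X * cnj (diag_phase_vec n \<phi> Y))"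
  (is "_ = ?M")
proof (rule eq_matI)
  let ?D = "2 ^ n :: nat" and ?N = "unitary_channel (diag_phase n \<phi>)"
  fix X Y assume "X < dim_row ?M" "Y < dim_col ?M"
  then have X: "X < ?D * ?D" and Y: "Y < ?D * ?D" by auto
  note X' = div_mod_less_of_less_square[OF X] and Y' = div_mod_less_of_less_square[OF Y]
  have summand: "kron (ketbra ?D i j) (?N (ketbra ?D i j)) $$ (X, Y) =
      (if i = X div ?D then if j = Y div ?D then
         if X mod ?D = i \<and> Y mod ?D = j then cis (\<phi> (bit i)) * cnj (cis (\<phi> (bit j))) else 0 else 0 else 0)"
    if "i < ?D" "j < ?D" for i j
  proof -
    have "dim_row (?N (ketbra ?D i j)) = ?D" "dim_col (?N (ketbra ?D i j)) = ?D"
      by (simp_all add: unitary_channel_def adj_def ketbra_def diag_phase_def monomial_mat_def)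
    then have "kron (ketbra ?D i j) (?N (ketbra ?D i j)) $$ (X, Y) =
        ketbra ?D i j $$ (X div ?D, Y div ?D) * ?N (ketbra ?D i j) $$ (X mod ?D, Y mod ?D)"
      unfolding kron_def using X Y by (simp add: ketbra_def)
    also have "\<dots> = ketbra ?D i j $$ (X div ?D, Y div ?D) *
        (cis (\<phi> (bit (X mod ?D))) * ketbra ?D i j $$ (X mod ?D, Y mod ?D) * cnj (cis (\<phi> (bit (Y mod ?D)))))"
      using X' Y' by (subst index_diag_phase_conj) (auto simp: ketbra_def)
    finally show ?thesis using X' Y' by (auto simp: ketbra_def)
  qed
  have "choi n ?N $$ (X, Y) = (\<Sum>i<?D. \<Sum>j<?D. kron (ketbra ?D i j) (?N (ketbra ?D i j)) $$ (X, Y))"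
    unfolding choi_def qdim_def using X Y by simp
  also have "\<dots> = (\<Sum>i<?D. \<Sum>j<?D. if i = X div ?D then if j = Y div ?D then
         if X mod ?D = i \<and> Y mod ?D = j then cis (\<phi> (bit i)) * cnj (cis (\<phi> (bit j))) else 0 else 0 else 0)"
    by (intro sum.cong refl) (simp add: summand)
  also have "\<dots> = (if X mod ?D = X div ?D \<and> Y mod ?D = Y div ?D then
      cis (\<phi> (bit (X div ?D))) * cnj (cis (\<phi> (bit (Y div ?D)))) else 0)"
    using X' Y' by (subst sum_sum_delta) auto
  also have "\<dots> = diag_phase_vec n \<phi> X * cnj (diag_phase_vec n \<phi> Y)"
    by (auto simp: diag_phase_vec_def)
  finally show "choi n ?N $$ (X, Y) = ?M $$ (X, Y)"
    using X Y by simp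
qed (auto simp: choi_def qdim_def)

definition pair_vec :: "nat \<Rightarrow> nat \<Rightarrow> nat \<Rightarrow> complex" where
  "pair_vec D x X = (if X = 0 \<or> X = x * D + x then 1 / 2 else 0)"

definition pair_test :: "nat \<Rightarrow> nat \<Rightarrow> complex mat" where
  "pair_test n x = mat (2 ^ n * 2 ^ n) (2 ^ n * 2 ^ n) (\<lambda>(X, Y). pair_vec (2 ^ n) x X * pair_vec (2 ^ n) x Y)"

definition pair_state :: "nat \<Rightarrow> nat \<Rightarrow> complex mat" where
  "pair_state n x = mat (2 ^ n) (2 ^ n) (\<lambda>(a, b). if a = b \<and> (a = 0 \<or> a = x) then 1 / 2 else 0)"

lemma pair_index:
  fixes x D :: nat
  assumes "0 < x" "x < D"
  shows "x * D + x < D * D" "(x * D + x) div D = x" "(x * D + x) mod D = x" "x * D + x \<noteq> 0"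
proof -
  have "x * D + x \<le> (D - 1) * D + (D - 1)"
    using assms by (intro add_mono mult_right_mono) auto
  also have "\<dots> < D * D"
    using assms by (cases D) (auto simp: algebra_simps)
  finally show "x * D + x < D * D" .
  show "(x * D + x) div D = x" "(x * D + x) mod D = x" "x * D + x \<noteq> 0"
    using assms by auto
qed

lemma sum_if_eq_either:
  fixes h :: "nat \<Rightarrow> complex"
  assumes "X0 \<noteq> X1" "X0 < M" "X1 < M"
  shows "(\<Sum>X<M. (if X = X0 \<or> X = X1 then c else 0) * h X) = c * (h X0 + h X1)"
proof -
  have "(\<Sum>X<M. (if X = X0 \<or> X = X1 then c else 0) * h X) =
        (\<Sum>X<M. (if X = X0 then c * h X0 else 0) + (if X = X1 then c * h X1 else 0))"
    by (rule sum.cong) (use assms in auto)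
  also have "\<dots> = c * h X0 + c * h X1"
    using assms by (simp add: sum.distrib)
  finally show ?thesis by (simp add: algebra_simps)
qed

lemma cnj_mult_self: "cnj z * z = complex_of_real ((cmod z)\<^sup>2)"
  using complex_norm_square[of z] by (simp add: mult.commute)

lemma cnj_pair_vec [simp]: "cnj (pair_vec D x X) = pair_vec D x X"
  by (simp add: pair_vec_def)

lemma test_value_pair_test_diag_phase:
  assumes x: "0 < x" "x < 2 ^ n"
  shows "test_value n (pair_test n x) (unitary_channel (diag_phase n \<phi>)) =
    (cmod ((cis (\<phi> (bit (0::nat))) + cis (\<phi> (bit x))) / 2))\<^sup>2"
proof -
  let ?D = "2 ^ n :: nat"
  let ?M = "?D * ?D" and ?w = "pair_vec ?D x" and ?g = "diag_phase_vec n \<phi>"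
  define s where "s = (cis (\<phi> (bit (0::nat))) + cis (\<phi> (bit x))) / 2"
  note xx = pair_index[OF x]
  have w: "?w X = (if X = 0 \<or> X = x * ?D + x then 1 / 2 else 0)" for X
    by (simp add: pair_vec_def)
  have "(\<Sum>Y<?M. ?w Y * ?g Y) = 1 / 2 * (?g 0 + ?g (x * ?D + x))"
    unfolding w by (rule sum_if_eq_either) (use xx in auto)
  also have "\<dots> = s"
    using xx by (simp add: s_def diag_phase_vec_def)
  finally have ket: "(\<Sum>Y<?M. ?w Y * ?g Y) = s" .
  have "(\<Sum>X<?M. ?w X * cnj (?g X)) = 1 / 2 * (cnj (?g 0) + cnj (?g (x * ?D + x)))"
    unfolding w by (rule sum_if_eq_either) (use xx in auto)
  also have "\<dots> = cnj s"
    using xx by (simp add: s_def diag_phase_vec_def)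
  finally have bra: "(\<Sum>X<?M. ?w X * cnj (?g X)) = cnj s" .
  have E: "pair_test n x \<in> carrier_mat ?M ?M"
    by (simp add: pair_test_def)
  have C: "choi n (unitary_channel (diag_phase n \<phi>)) \<in> carrier_mat ?M ?M"
    by (simp add: choi_diag_phase)
  have "mtrace (pair_test n x * choi n (unitary_channel (diag_phase n \<phi>)))
      = (\<Sum>X<?M. \<Sum>Y<?M. pair_test n x $$ (X, Y) * choi n (unitary_channel (diag_phase n \<phi>)) $$ (Y, X))"
    unfolding mtrace_def using E by (simp add: index_mult_mat_sum[OF E C])
  also have "\<dots> = (\<Sum>X<?M. \<Sum>Y<?M. (?w X * cnj (?g X)) * (?w Y * ?g Y))"
    by (intro sum.cong refl) (simp add: pair_test_def choi_diag_phase)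
  also have "\<dots> = cnj s * s"
    by (simp add: sum_product[symmetric] ket bra)
  finally show ?thesis
    unfolding test_value_def s_def[symmetric] by (simp only: cnj_mult_self Re_complex_of_real)
qed

lemma test_value_pair_test_sign_phase:
  assumes "0 < x" "x < 2 ^ n" "\<Phi> (bit (0::nat)) = 0" "\<Phi> (bit x) = 0 \<or> \<Phi> (bit x) = pi"
  shows "test_value n (pair_test n x) (unitary_channel (diag_phase n (\<lambda>b. \<Phi> b + c))) =
    (if \<Phi> (bit x) = pi then 0 else 1)"
proof -
  have "cis (pi + c) = - cis c"
    by (simp add: cis_mult[symmetric] cis_pi)
  then show ?thesis
    using assms by (auto simp: test_value_pair_test_diag_phase norm_divide)
qed

definition quad_form :: "nat \<Rightarrow> complex mat \<Rightarrow> (nat \<Rightarrow> complex) \<Rightarrow> complex" where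
  "quad_form d A v = (\<Sum>i<d. \<Sum>j<d. cnj (v i) * A $$ (i, j) * v j)"

lemma psdI:
  assumes "A \<in> carrier_mat d d" "\<And>v. \<exists>r\<ge>0. quad_form d A v = complex_of_real r"
  shows "psd d A"
  unfolding psd_def Let_def
proof (intro conjI allI assms(1))
  fix v :: "nat \<Rightarrow> complex"
  obtain r where "r \<ge> 0" "quad_form d A v = complex_of_real r"
    using assms(2) by blast
  then show "Im (\<Sum>i<d. \<Sum>j<d. cnj (v i) * A $$ (i, j) * v j) = 0"
    "0 \<le> Re (\<Sum>i<d. \<Sum>j<d. cnj (v i) * A $$ (i, j) * v j)"
    unfolding quad_form_def by auto
qed

lemma quad_form_minus:
  assumes "A \<in> carrier_mat d d" "B \<in> carrier_mat d d"
  shows "quad_form d (A - B) v = quad_form d A v - quad_form d B v"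
proof -
  have "quad_form d (A - B) v =
      (\<Sum>i<d. \<Sum>j<d. cnj (v i) * A $$ (i, j) * v j - cnj (v i) * B $$ (i, j) * v j)"
    unfolding quad_form_def using assms by (intro sum.cong refl) (simp add: right_diff_distrib left_diff_distrib)
  then show ?thesis
    unfolding quad_form_def by (simp only: sum_subtractf)
qed

lemma quad_form_pair_test:
  "quad_form (2 ^ n * 2 ^ n) (pair_test n x) v =
    complex_of_real ((cmod (\<Sum>j<2 ^ n * 2 ^ n. pair_vec (2 ^ n) x j * v j))\<^sup>2)"
proof -
  let ?M = "2 ^ n * 2 ^ n :: nat" and ?w = "pair_vec (2 ^ n) x"
  let ?S = "\<Sum>j<?M. ?w j * v j"
  have "quad_form ?M (pair_test n x) v = (\<Sum>i<?M. cnj (v i) * ?w i) * ?S"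
    unfolding quad_form_def pair_test_def sum_product by (intro sum.cong refl) (simp add: algebra_simps)
  also have "(\<Sum>i<?M. cnj (v i) * ?w i) = cnj ?S"
    by (simp add: cnj_sum mult.commute)
  finally show ?thesis by (simp only: cnj_mult_self)
qed

lemma quad_form_kron_pair_state:
  "quad_form (2 ^ n * 2 ^ n) (kron (pair_state n x) (1\<^sub>m (2 ^ n))) v =
     complex_of_real (\<Sum>X<2 ^ n * 2 ^ n. if X div 2 ^ n = 0 \<or> X div 2 ^ n = x then (cmod (v X))\<^sup>2 / 2 else 0)"
proof -
  let ?D = "2 ^ n :: nat"
  have entry: "kron (pair_state n x) (1\<^sub>m ?D) $$ (X, Y) =
      (if Y = X \<and> (X div ?D = 0 \<or> X div ?D = x) then 1 / 2 else 0)"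
    if X: "X < ?D * ?D" and Y: "Y < ?D * ?D" for X Y
  proof -
    note X' = div_mod_less_of_less_square[OF X] and Y' = div_mod_less_of_less_square[OF Y]
    have eq: "Y = X \<longleftrightarrow> X div ?D = Y div ?D \<and> X mod ?D = Y mod ?D"
      by (metis div_mult_mod_eq)
    have "kron (pair_state n x) (1\<^sub>m ?D) $$ (X, Y) =
        pair_state n x $$ (X div ?D, Y div ?D) * 1\<^sub>m ?D $$ (X mod ?D, Y mod ?D)"
      unfolding kron_def using X Y by (simp add: pair_state_def)
    also have "\<dots> = (if Y = X \<and> (X div ?D = 0 \<or> X div ?D = x) then 1 / 2 else 0)"
      unfolding eq using X' Y' by (auto simp: pair_state_def)
    finally show ?thesis .
  qed
  have "quad_form (?D * ?D) (kron (pair_state n x) (1\<^sub>m ?D)) v =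
      (\<Sum>X<?D * ?D. \<Sum>Y<?D * ?D. if Y = X then
         (if X div ?D = 0 \<or> X div ?D = x then cnj (v X) * v X / 2 else 0) else 0)"
    unfolding quad_form_def by (intro sum.cong refl) (auto simp: entry)
  also have "\<dots> = (\<Sum>X<?D * ?D. complex_of_real (if X div ?D = 0 \<or> X div ?D = x then (cmod (v X))\<^sup>2 / 2 else 0))"
    by (intro sum.cong refl) (simp add: cnj_mult_self)
  finally show ?thesis by simp
qed

lemma density_op_pair_state:
  assumes "0 < x" "x < 2 ^ n"
  shows "density_op (2 ^ n) (pair_state n x)"
  unfolding density_op_def
proof
  show "psd (2 ^ n) (pair_state n x)"
  proof (rule psdI)
    fix v
    have "quad_form (2 ^ n) (pair_state n x) v =
        (\<Sum>a<2 ^ n. complex_of_real (if a = 0 \<or> a = x then (cmod (v a))\<^sup>2 / 2 else 0))"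
      unfolding quad_form_def
    proof (rule sum.cong[OF refl])
      fix a :: nat assume a: "a \<in> {..<2 ^ n}"
      have "(\<Sum>b<2 ^ n. cnj (v a) * pair_state n x $$ (a, b) * v b) =
          (\<Sum>b<2 ^ n. if b = a then (if a = 0 \<or> a = x then cnj (v a) * v a / 2 else 0) else 0)"
        using a by (intro sum.cong refl) (auto simp: pair_state_def)
      also have "\<dots> = complex_of_real (if a = 0 \<or> a = x then (cmod (v a))\<^sup>2 / 2 else 0)"
        using a by (simp add: cnj_mult_self)
      finally show "(\<Sum>b<2 ^ n. cnj (v a) * pair_state n x $$ (a, b) * v b) =
          complex_of_real (if a = 0 \<or> a = x then (cmod (v a))\<^sup>2 / 2 else 0)" .
    qed
    also have "\<dots> = complex_of_real (\<Sum>a<2 ^ n. if a = 0 \<or> a = x then (cmod (v a))\<^sup>2 / 2 else 0)"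
      by simp
    finally have quad: "quad_form (2 ^ n) (pair_state n x) v =
        complex_of_real (\<Sum>a<2 ^ n. if a = 0 \<or> a = x then (cmod (v a))\<^sup>2 / 2 else 0)" .
    have "0 \<le> (\<Sum>a<2 ^ n. if a = 0 \<or> a = x then (cmod (v a))\<^sup>2 / 2 else 0)"
      by (intro sum_nonneg) simp
    with quad show "\<exists>r\<ge>0. quad_form (2 ^ n) (pair_state n x) v = complex_of_real r"
      by blast
  qed (simp add: pair_state_def)
  have "mtrace (pair_state n x) = (\<Sum>a<2 ^ n. (if a = 0 \<or> a = x then 1 / 2 else 0) * 1)"
    unfolding mtrace_def pair_state_def by (intro sum.cong refl) auto
  also have "\<dots> = 1"
    using sum_if_eq_either[of 0 x "2 ^ n" "1 / 2" "\<lambda>_. 1"] assms by simp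
  finally show "mtrace (pair_state n x) = 1" .
qed

lemma cmod_mean_square_le: "(cmod ((a + b) / 2))\<^sup>2 \<le> ((cmod a)\<^sup>2 + (cmod b)\<^sup>2) / 2"
proof -
  have "cmod ((a + b) / 2) \<le> (cmod a + cmod b) / 2"
    using norm_triangle_ineq[of a b] by (simp add: norm_divide)
  then have "(cmod ((a + b) / 2))\<^sup>2 \<le> ((cmod a + cmod b) / 2)\<^sup>2"
    by (intro power_mono) auto
  also have "\<dots> = ((cmod a)\<^sup>2 + (cmod b)\<^sup>2) / 2 - ((cmod a - cmod b) / 2)\<^sup>2"
    by (simp add: power2_eq_square field_simps)
  finally show ?thesis
    using zero_le_power2[of "(cmod a - cmod b) / 2"] by linarith
qed

lemma psd_kron_pair_state_minus_pair_test:
  assumes x: "0 < x" "x < 2 ^ n"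
  shows "psd (2 ^ n * 2 ^ n) (kron (pair_state n x) (1\<^sub>m (2 ^ n)) - pair_test n x)"
proof (rule psdI)
  let ?D = "2 ^ n :: nat"
  let ?M = "?D * ?D"
  have carrier: "kron (pair_state n x) (1\<^sub>m ?D) \<in> carrier_mat ?M ?M" "pair_test n x \<in> carrier_mat ?M ?M"
    by (simp_all add: kron_def pair_state_def pair_test_def)
  then show "kron (pair_state n x) (1\<^sub>m ?D) - pair_test n x \<in> carrier_mat ?M ?M"
    by (simp add: minus_carrier_mat)
  fix v
  define f where "f X = (if X div ?D = 0 \<or> X div ?D = x then (cmod (v X))\<^sup>2 / 2 else 0)" for X
  note xx = pair_index[OF x]
  have mean: "(\<Sum>j<?M. pair_vec ?D x j * v j) = (v 0 + v (x * ?D + x)) / 2"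
    unfolding pair_vec_def by (subst sum_if_eq_either) (use xx in auto)
  have "(cmod (\<Sum>j<?M. pair_vec ?D x j * v j))\<^sup>2 \<le> ((cmod (v 0))\<^sup>2 + (cmod (v (x * ?D + x)))\<^sup>2) / 2"
    unfolding mean by (rule cmod_mean_square_le)
  also have "\<dots> = sum f {0, x * ?D + x}"
    using xx by (simp add: f_def field_simps)
  also have "\<dots> \<le> sum f {..<?M}"
    by (rule sum_mono2) (use xx in \<open>auto simp: f_def\<close>)
  finally have "0 \<le> sum f {..<?M} - (cmod (\<Sum>j<?M. pair_vec ?D x j * v j))\<^sup>2"
    by simp
  moreover have "quad_form ?M (kron (pair_state n x) (1\<^sub>m ?D) - pair_test n x) v =
      complex_of_real (sum f {..<?M} - (cmod (\<Sum>j<?M. pair_vec ?D x j * v j))\<^sup>2)"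
    unfolding quad_form_minus[OF carrier] quad_form_kron_pair_state quad_form_pair_test f_def by simp
  ultimately show "\<exists>r\<ge>0. quad_form ?M (kron (pair_state n x) (1\<^sub>m ?D) - pair_test n x) v = complex_of_real r"
    by blast
qed

lemma channel_test_pair_test:
  assumes "0 < x" "x < 2 ^ n"
  shows "channel_test n (pair_test n x)"
proof -
  have "psd (2 ^ n * 2 ^ n) (pair_test n x)"
  proof (rule psdI)
    show "pair_test n x \<in> carrier_mat (2 ^ n * 2 ^ n) (2 ^ n * 2 ^ n)"
      by (simp add: pair_test_def)
    show "\<exists>r\<ge>0. quad_form (2 ^ n * 2 ^ n) (pair_test n x) v = complex_of_real r" for v
      using quad_form_pair_test zero_le_power2 by blast
  qed
  then show ?thesis
    unfolding channel_test_def qdim_def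
    using density_op_pair_state[OF assms] psd_kron_pair_state_minus_pair_test[OF assms] by blast
qed

section \<open>The adversary\<close>

definition far_bit :: "real \<Rightarrow> real" where
  "far_bit p = (if p \<le> 1 / 2 then 1 else 0)"

text \<open>The adversary runs the deterministic learner in advance on its own answers.\<close>

primrec simulated_hist :: "(history \<Rightarrow> complex mat \<Rightarrow> real) \<Rightarrow> (nat \<Rightarrow> complex mat) \<Rightarrow> nat \<Rightarrow> history" where
  "simulated_hist L E 0 = []"
| "simulated_hist L E (Suc j) = simulated_hist L E j @ [(E j, far_bit (L (simulated_hist L E j) (E j)))]"

lemma length_simulated_hist [simp]: "length (simulated_hist L E j) = j"
  by (induction j) auto

lemma eps_mistakes_simulated_hist:
  assumes "\<epsilon> < 1 / 2"
    and answers: "\<forall>j<T. test_value n (E j) \<N> = far_bit (L (simulated_hist L E j) (E j))"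
  shows "eps_mistakes n L (\<lambda>h. E (length h)) \<N> \<epsilon> T = T"
proof -
  let ?A = "\<lambda>h. E (length h)"
  have hist: "hist n ?A \<N> t = simulated_hist L E t" if "t \<le> T" for t
    using that by (induction t) (simp_all add: answers)
  have "{t. t < T \<and> \<epsilon> < \<bar>L (hist n ?A \<N> t) (?A (hist n ?A \<N> t)) - test_value n (?A (hist n ?A \<N> t)) \<N>\<bar>}
      = {..<T}"
    using assms(1) by (auto simp: hist answers far_bit_def)
  then show ?thesis
    unfolding eps_mistakes_def by simp
qed

lemma pair_tests_realizable:
  assumes n: "2 \<le> n" and m: "m \<le> n" and k: "k < 2 ^ m"
    and v: "\<forall>j<k. v j = 0 \<or> v j = 1"
  shows "\<exists>\<N>\<in>gate_class n (3 * 2 ^ m). \<forall>j<k. test_value n (pair_test n (Suc j)) \<N> = v j"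
proof -
  define \<Phi> where "\<Phi> b = (if \<exists>j<k. v j = 0 \<and> (\<forall>i<m. b i = bit (Suc j) i) then pi else 0)" for b
  have "depends_on_first m \<Phi>"
    unfolding depends_on_first_def \<Phi>_def by auto
  then obtain gs c where gs: "length gs \<le> 3 * 2 ^ m" "\<forall>g\<in>set gs. two_qubit_gate_channel n g"
    "circuit_implements n gs (diag_phase n (\<lambda>b. \<Phi> b + c))"
    using phase_realizable_depends_on_first[OF n m] unfolding phase_realizable_def by blast
  have low_bits: "(\<forall>i<m. bit y i = bit (Suc j) i) \<longleftrightarrow> y = Suc j" if "y < 2 ^ m" "j < k" for y j
    using eq_iff_low_bits_eq[of y m "Suc j"] that k by simp
  have "test_value n (pair_test n (Suc j)) (foldr (\<circ>) gs id) = v j" if j: "j < k" for j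
  proof -
    have "(2::nat) ^ m \<le> 2 ^ n"
      using m by (simp add: power_increasing)
    then have "Suc j < 2 ^ n"
      using j k by linarith
    moreover have "\<Phi> (bit (0::nat)) = 0"
      using low_bits[of 0] by (auto simp: \<Phi>_def)
    moreover have "\<Phi> (bit (Suc j)) = (if v j = 0 then pi else 0)"
      using low_bits[of "Suc j"] j k by (auto simp: \<Phi>_def)
    ultimately have "test_value n (pair_test n (Suc j)) (unitary_channel (diag_phase n (\<lambda>b. \<Phi> b + c))) = v j"
      using v j by (auto simp: test_value_pair_test_sign_phase)
    then show ?thesis
      using test_value_cong[OF gs(3)[unfolded circuit_implements_def]] by simp
  qed
  moreover have "foldr (\<circ>) gs id \<in> gate_class n (3 * 2 ^ m)"
    unfolding gate_class_def using gs(1,2) by blast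
  ultimately show ?thesis by blast
qed

lemma adversary_forces_mistakes:
  assumes "\<epsilon> < 1 / 2" "2 \<le> n" "1 \<le> m" "m \<le> n"
  shows "\<exists>\<N>\<in>gate_class n (3 * 2 ^ m). \<exists>A. (\<forall>h. channel_test n (A h)) \<and>
    eps_mistakes n L A \<N> \<epsilon> (2 ^ m - 1) = 2 ^ m - 1"
proof -
  define k :: nat where "k = 2 ^ m - 1"
  have k: "0 < k" "k < 2 ^ m"
    using one_less_power[of "2::nat" m] assms(3) by (auto simp: k_def)
  have "(2::nat) ^ m \<le> 2 ^ n"
    using assms(4) by (simp add: power_increasing)
  then have "k < 2 ^ n"
    using k by linarith
  define E where "E j = pair_test n (Suc (j mod k))" for j
  define v where "v j = far_bit (L (simulated_hist L E j) (E j))" for j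
  have "\<forall>j<k. v j = 0 \<or> v j = 1"
    by (simp add: v_def far_bit_def)
  then obtain \<N> where \<N>: "\<N> \<in> gate_class n (3 * 2 ^ m)" "\<forall>j<k. test_value n (pair_test n (Suc j)) \<N> = v j"
    using pair_tests_realizable[OF assms(2,4) k(2)] by blast
  have "Suc (j mod k) < 2 ^ n" for j
    using mod_less_divisor[OF k(1), of j] \<open>k < 2 ^ n\<close> by linarith
  then have tests: "\<forall>h. channel_test n (E (length h))"
    unfolding E_def by (simp add: channel_test_pair_test)
  have "E j = pair_test n (Suc j)" if "j < k" for j
    using that by (simp add: E_def)
  then have "eps_mistakes n L (\<lambda>h. E (length h)) \<N> \<epsilon> k = k"
    using \<N>(2) by (intro eps_mistakes_simulated_hist[OF assms(1)]) (simp add: v_def)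
  then show ?thesis
    unfolding k_def using tests by (intro bexI[OF _ \<N>(1)] exI[of _ "\<lambda>h. E (length h)"]) simp
qed

lemma gate_class_mono: "G \<le> G' \<Longrightarrow> gate_class n G \<subseteq> gate_class n G'"
  unfolding gate_class_def by auto

lemma exponent_within_budget:
  fixes G n :: nat
  assumes "6 \<le> G" "1 \<le> n"
  obtains m where "1 \<le> m" "m \<le> n" "3 * 2 ^ m \<le> G" "m = n \<or> G < 3 * 2 ^ Suc m"
proof -
  define m where "m = Max {m. m \<le> n \<and> 3 * 2 ^ m \<le> G}"
  have fin: "finite {m. m \<le> n \<and> 3 * 2 ^ m \<le> G}" and one: "1 \<in> {m. m \<le> n \<and> 3 * 2 ^ m \<le> G}"
    using assms by auto
  have "m \<in> {m. m \<le> n \<and> 3 * 2 ^ m \<le> G}"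
    unfolding m_def using fin one by (intro Max_in) auto
  moreover have "1 \<le> m"
    unfolding m_def using fin one by (rule Max_ge)
  moreover have "m = n \<or> G < 3 * 2 ^ Suc m"
  proof (rule ccontr)
    assume "\<not> (m = n \<or> G < 3 * 2 ^ Suc m)"
    then have "Suc m \<in> {m. m \<le> n \<and> 3 * 2 ^ m \<le> G}"
      using \<open>m \<in> _\<close> by auto
    then show False
      using Max_ge[OF fin] unfolding m_def[symmetric] by fastforce
  qed
  ultimately show ?thesis
    using that by blast
qed

lemma min_exp_sqrt_le_exp_minus_1:
  assumes "6 \<le> G" "1 \<le> m" "m = n \<or> G < 3 * 2 ^ Suc m"
  shows "1 / 12 * min (2 ^ n) (sqrt (real G)) \<le> real (2 ^ m - 1)"
proof -
  have m2: "(2::real) \<le> 2 ^ m"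
    using power_increasing[OF assms(2), of "2::real"] by simp
  have "real (2 ^ m - 1) = 2 ^ m - 1"
    by (simp add: of_nat_diff)
  moreover have "1 / 12 * min (2 ^ n) (sqrt (real G)) \<le> 2 ^ m - 1"
    using assms(3)
  proof
    assume "m = n"
    then show ?thesis using m2 by simp
  next
    assume "G < 3 * 2 ^ Suc m"
    then have "real G < real (6 * 2 ^ m)"
      by (simp only: of_nat_less_iff) simp
    then have "real G < 6 * 2 ^ m"
      by simp
    moreover have "sqrt (real G) \<le> real G"
      using assms(1) by (intro real_le_lsqrt) (auto simp: power2_eq_square)
    ultimately show ?thesis using m2 by simp
  qed
  ultimately show ?thesis by simp
qed

theorem corollary4p5:
  fixes \<epsilon> :: real
  assumes "\<epsilon> < 1 / 2"
  shows "\<exists>c > 0. \<exists>n0 G0. \<forall>n \<ge> n0. \<forall>G \<ge> G0.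
           \<forall>L :: history \<Rightarrow> complex mat \<Rightarrow> real.
             (\<forall>h E. 0 \<le> L h E \<and> L h E \<le> 1) \<longrightarrow>
             (\<exists>\<N> \<in> gate_class n G. \<exists>A :: history \<Rightarrow> complex mat.
                (\<forall>h. channel_test n (A h)) \<and>
                (\<exists>T. real (eps_mistakes n L A \<N> \<epsilon> T) \<ge> c * min (2 ^ n) (sqrt (real G))))"
proof -
  have "\<exists>\<N> \<in> gate_class n G. \<exists>A. (\<forall>h. channel_test n (A h)) \<and>
          (\<exists>T. real (eps_mistakes n L A \<N> \<epsilon> T) \<ge> 1 / 12 * min (2 ^ n) (sqrt (real G)))"
    if n: "2 \<le> n" and G: "6 \<le> G" for n G and L :: "history \<Rightarrow> complex mat \<Rightarrow> real"
    \<comment> \<open>the adversary does not need the predictions to lie in [0, 1]\<close>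
  proof -
    obtain m where m: "1 \<le> m" "m \<le> n" "3 * 2 ^ m \<le> G" "m = n \<or> G < 3 * 2 ^ Suc m"
      using exponent_within_budget[OF G, of n] n by auto
    obtain \<N> A where "\<N> \<in> gate_class n G" "\<forall>h. channel_test n (A h)"
      "eps_mistakes n L A \<N> \<epsilon> (2 ^ m - 1) = 2 ^ m - 1"
      using adversary_forces_mistakes[OF assms n m(1,2)] gate_class_mono[OF m(3)] by blast
    then show ?thesis
      using min_exp_sqrt_le_exp_minus_1[OF G m(1,4)] by metis
  qed
  then show ?thesis
    by (intro exI[of _ "1 / 12"] conjI exI[of _ 2] exI[of _ 6]) auto
qed

end
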